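(* In the setting of the context, fix two distinct exposures $d_k\neq d_l$. Let $\widehat{\tau_{HT}}(d_k,d_l)=\frac1N\big[\widehat{y^T_{HT}}(d_k)-\widehat{y^T_{HT}}(d_l)\big]$ and define $$\widehat{\mathrm{Var}}[\widehat{\tau_{HT}}(d_k,d_l)]=\frac{1}{N^2}\Big\{\widehat{\mathrm{Var}}[\widehat{y^T_{HT}}(d_k)]+\widehat{A_2}(d_k)+\widehat{\mathrm{Var}}[\widehat{y^T_{HT}}(d_l)]+\widehat{A_2}(d_l)-2\,\widehat{\mathrm{Cov}}_A[\widehat{y^T_{HT}}(d_k),\widehat{y^T_{HT}}(d_l)]\Big\},$$ with the component estimators defined in the context. Then $$\mathrm{E}\big[\widehat{\mathrm{Var}}[\widehat{\tau_{HT}}(d_k,d_l)]\big]\ \ge\ \mathrm{Var}\big[\widehat{\tau_{HT}}(d_k,d_l)\big].$$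
   Context: A finite population $U$ of units $i=1,\dots,N$. A random treatment assignment vector $\mathbf{Z}$ takes values in $\Omega=\{\mathbf{z}\in\{1,\dots,M\}^N:p_{\mathbf{z}}>0\}$ with known probabilities $p_{\mathbf{z}}$. An exposure mapping $f:\Omega\times\Theta\to\Delta=\{d_1,\dots,d_K\}$ with unit traits $\theta_i$ gives exposures $D_i=f(\mathbf{Z},\theta_i)$. Write $\pi_i(d)=\Pr(D_i=d)$, $\pi_{ij}(d,d')=\Pr(D_i=d,D_j=d')$, $\pi_{ij}(d)=\pi_{ij}(d,d)$ (so $\pi_{ii}(d)=\pi_i(d)$ and $\pi_{ii}(d,d')=0$ for $d\ne d'$); assume $0<\pi_i(d_k)<1$ for all $i,k$. Potential outcomes $y_i(d)$ are fixed reals; the observed outcome is $y_i(D_i)$. Convention: $0/0=0$. Definitions: $\widehat{y^T_{HT}}(d)=\sum_i \mathbf{I}(D_i=d)y_i(d)/\pi_i(d)$; $\widehat{\mathrm{Var}}[\widehat{y^T_{HT}}(d)]=\sum_{i\in U}\mathbf{I}(D_i=d)[1-\pi_i(d)]\big[y_i(d)/\pi_i(d)\big]^2+\sum_{i\in U}\sum_{j\in U\setminus\{i\}}\mathbf{I}(D_i=d)\mathbf{I}(D_j=d)\frac{\pi_{ij}(d)-\pi_i(d)\pi_j(d)}{\pi_{ij}(d)}\frac{y_i(d)}{\pi_i(d)}\frac{y_j(d)}{\pi_j(d)}$; $\widehat{A_2}(d)=\sum_{i\in U}\sum_{j\in U\setminus\{i\}:\ \pi_{ij}(d)=0}\Big[\frac{\mathbf{I}(D_i=d)y_i(d)^2}{2\pi_i(d)}+\frac{\mathbf{I}(D_j=d)y_j(d)^2}{2\pi_j(d)}\Big]$;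 $\widehat{\mathrm{Cov}}_A[\widehat{y^T_{HT}}(d_k),\widehat{y^T_{HT}}(d_l)]=\sum_{i\in U}\sum_{j\in U\setminus\{i\}:\pi_{ij}(d_k,d_l)>0}\frac{\mathbf{I}(D_i=d_k)\mathbf{I}(D_j=d_l)}{\pi_{ij}(d_k,d_l)}\frac{y_i(d_k)}{\pi_i(d_k)}\frac{y_j(d_l)}{\pi_j(d_l)}[\pi_{ij}(d_k,d_l)-\pi_i(d_k)\pi_j(d_l)]-\sum_{i\in U}\sum_{j\in U:\pi_{ij}(d_k,d_l)=0}\Big[\frac{\mathbf{I}(D_i=d_k)y_i(d_k)^2}{2\pi_i(d_k)}+\frac{\mathbf{I}(D_j=d_l)y_j(d_l)^2}{2\pi_j(d_l)}\Big]$. Expectations and variances are over the randomization distribution of $\mathbf{Z}$. *)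

theory Defs
  imports Complex_Main "HOL-Library.FuncSet"
begin

text \<open>Randomization distribution: a finite support Om of assignment vectors with
  probabilities p. Units are 0..N-1. D i z is the exposure of unit i under assignment z.
  y i d is the potential outcome of unit i under exposure d.\<close>

definition Expect :: "(nat \<Rightarrow> nat) set \<Rightarrow> ((nat \<Rightarrow> nat) \<Rightarrow> real) \<Rightarrow> ((nat \<Rightarrow> nat) \<Rightarrow> real) \<Rightarrow> real" where
  "Expect Om p X = (\<Sum>z\<in>Om. p z * X z)"

definition Vr :: "(nat \<Rightarrow> nat) set \<Rightarrow> ((nat \<Rightarrow> nat) \<Rightarrow> real) \<Rightarrow> ((nat \<Rightarrow> nat) \<Rightarrow> real) \<Rightarrow> real" where
  "Vr Om p X = Expect Om p (\<lambda>z. (X z - Expect Om p X)^2)"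

definition ind :: "bool \<Rightarrow> real" where
  "ind b = (if b then 1 else 0)"

definition pi1 :: "(nat \<Rightarrow> nat) set \<Rightarrow> ((nat \<Rightarrow> nat) \<Rightarrow> real) \<Rightarrow> (nat \<Rightarrow> (nat \<Rightarrow> nat) \<Rightarrow> 'd) \<Rightarrow> nat \<Rightarrow> 'd \<Rightarrow> real" where
  "pi1 Om p D i d = Expect Om p (\<lambda>z. ind (D i z = d))"

definition pi2 :: "(nat \<Rightarrow> nat) set \<Rightarrow> ((nat \<Rightarrow> nat) \<Rightarrow> real) \<Rightarrow> (nat \<Rightarrow> (nat \<Rightarrow> nat) \<Rightarrow> 'd) \<Rightarrow> nat \<Rightarrow> nat \<Rightarrow> 'd \<Rightarrow> 'd \<Rightarrow> real" where
  "pi2 Om p D i j d d' = Expect Om p (\<lambda>z. ind (D i z = d \<and> D j z = d'))"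

definition yHT :: "nat \<Rightarrow> (nat \<Rightarrow> nat) set \<Rightarrow> ((nat \<Rightarrow> nat) \<Rightarrow> real) \<Rightarrow> (nat \<Rightarrow> (nat \<Rightarrow> nat) \<Rightarrow> 'd) \<Rightarrow> (nat \<Rightarrow> 'd \<Rightarrow> real) \<Rightarrow> 'd \<Rightarrow> (nat \<Rightarrow> nat) \<Rightarrow> real" where
  "yHT N Om p D y d z = (\<Sum>i<N. ind (D i z = d) * y i d / pi1 Om p D i d)"

definition VarHat :: "nat \<Rightarrow> (nat \<Rightarrow> nat) set \<Rightarrow> ((nat \<Rightarrow> nat) \<Rightarrow> real) \<Rightarrow> (nat \<Rightarrow> (nat \<Rightarrow> nat) \<Rightarrow> 'd) \<Rightarrow> (nat \<Rightarrow> 'd \<Rightarrow> real) \<Rightarrow> 'd \<Rightarrow> (nat \<Rightarrow> nat) \<Rightarrow> real" where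
  "VarHat N Om p D y d z =
     (\<Sum>i<N. ind (D i z = d) * (1 - pi1 Om p D i d) * (y i d / pi1 Om p D i d)^2)
   + (\<Sum>i<N. \<Sum>j\<in>{..<N} - {i}. ind (D i z = d) * ind (D j z = d)
        * ((pi2 Om p D i j d d - pi1 Om p D i d * pi1 Om p D j d) / pi2 Om p D i j d d)
        * (y i d / pi1 Om p D i d) * (y j d / pi1 Om p D j d))"

definition A2Hat :: "nat \<Rightarrow> (nat \<Rightarrow> nat) set \<Rightarrow> ((nat \<Rightarrow> nat) \<Rightarrow> real) \<Rightarrow> (nat \<Rightarrow> (nat \<Rightarrow> nat) \<Rightarrow> 'd) \<Rightarrow> (nat \<Rightarrow> 'd \<Rightarrow> real) \<Rightarrow> 'd \<Rightarrow> (nat \<Rightarrow> nat) \<Rightarrow> real" where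
  "A2Hat N Om p D y d z =
     (\<Sum>i<N. \<Sum>j\<in>{j. j < N \<and> j \<noteq> i \<and> pi2 Om p D i j d d = 0}.
        ind (D i z = d) * (y i d)^2 / (2 * pi1 Om p D i d)
      + ind (D j z = d) * (y j d)^2 / (2 * pi1 Om p D j d))"

definition CovAHat :: "nat \<Rightarrow> (nat \<Rightarrow> nat) set \<Rightarrow> ((nat \<Rightarrow> nat) \<Rightarrow> real) \<Rightarrow> (nat \<Rightarrow> (nat \<Rightarrow> nat) \<Rightarrow> 'd) \<Rightarrow> (nat \<Rightarrow> 'd \<Rightarrow> real) \<Rightarrow> 'd \<Rightarrow> 'd \<Rightarrow> (nat \<Rightarrow> nat) \<Rightarrow> real" where
  "CovAHat N Om p D y dk dl z =
     (\<Sum>i<N. \<Sum>j\<in>{j. j < N \<and> j \<noteq> i \<and> pi2 Om p D i j dk dl > 0}.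
        ind (D i z = dk) * ind (D j z = dl) / pi2 Om p D i j dk dl
        * (y i dk / pi1 Om p D i dk) * (y j dl / pi1 Om p D j dl)
        * (pi2 Om p D i j dk dl - pi1 Om p D i dk * pi1 Om p D j dl))
   - (\<Sum>i<N. \<Sum>j\<in>{j. j < N \<and> pi2 Om p D i j dk dl = 0}.
        ind (D i z = dk) * (y i dk)^2 / (2 * pi1 Om p D i dk)
      + ind (D j z = dl) * (y j dl)^2 / (2 * pi1 Om p D j dl))"

definition tauHT :: "nat \<Rightarrow> (nat \<Rightarrow> nat) set \<Rightarrow> ((nat \<Rightarrow> nat) \<Rightarrow> real) \<Rightarrow> (nat \<Rightarrow> (nat \<Rightarrow> nat) \<Rightarrow> 'd) \<Rightarrow> (nat \<Rightarrow> 'd \<Rightarrow> real) \<Rightarrow> 'd \<Rightarrow> 'd \<Rightarrow> (nat \<Rightarrow> nat) \<Rightarrow> real" where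
  "tauHT N Om p D y dk dl z = (yHT N Om p D y dk z - yHT N Om p D y dl z) / real N"

definition VarTauHat :: "nat \<Rightarrow> (nat \<Rightarrow> nat) set \<Rightarrow> ((nat \<Rightarrow> nat) \<Rightarrow> real) \<Rightarrow> (nat \<Rightarrow> (nat \<Rightarrow> nat) \<Rightarrow> 'd) \<Rightarrow> (nat \<Rightarrow> 'd \<Rightarrow> real) \<Rightarrow> 'd \<Rightarrow> 'd \<Rightarrow> (nat \<Rightarrow> nat) \<Rightarrow> real" where
  "VarTauHat N Om p D y dk dl z =
     (VarHat N Om p D y dk z + A2Hat N Om p D y dk z
      + VarHat N Om p D y dl z + A2Hat N Om p D y dl z
      - 2 * CovAHat N Om p D y dk dl z) / (real N)^2"

end

theory Submission
  imports Defs
begin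

text \<open>Both the variance of a Horvitz-Thompson total and the covariance of two of them are
  double sums over pairs of units with weights \<open>\<pi>\<^sub>i\<^sub>j - \<pi>\<^sub>i \<pi>\<^sub>j\<close>. The estimators
  \<open>VarHat\<close> and \<open>CovAHat\<close> are unbiased for every term with \<open>\<pi>\<^sub>i\<^sub>j > 0\<close>; for the
  pairs with \<open>\<pi>\<^sub>i\<^sub>j = 0\<close> the missing term is \<open>-y\<^sub>i y\<^sub>j\<close> (resp. \<open>+y\<^sub>i y\<^sub>j\<close> in the
  covariance), and the correction terms \<open>A2Hat\<close> and the subtracted part of \<open>CovAHat\<close> have
  expectation \<open>(y\<^sub>i\<^sup>2 + y\<^sub>j\<^sup>2)/2\<close> per such pair, which dominates it by Young's inequality.
  Since \<open>Var(X - Y) = Var X + Var Y - 2 Cov(X,Y)\<close>, the bounds combine.\<close>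

lemma ind_conj: "ind a * ind b = ind (a \<and> b)"
  by (simp add: ind_def)

lemma Expect_add: "Expect Om p (\<lambda>z. f z + g z) = Expect Om p f + Expect Om p g"
  by (simp add: Expect_def distrib_left sum.distrib)

lemma Expect_diff: "Expect Om p (\<lambda>z. f z - g z) = Expect Om p f - Expect Om p g"
  by (simp add: Expect_def right_diff_distrib sum_subtractf)

lemma Expect_sum: "Expect Om p (\<lambda>z. \<Sum>i\<in>A. f i z) = (\<Sum>i\<in>A. Expect Om p (f i))"
  unfolding Expect_def sum_distrib_left by (rule sum.swap)

lemma Expect_mult_right: "Expect Om p (\<lambda>z. f z * c) = Expect Om p f * c"
  by (simp add: Expect_def sum_distrib_right mult.assoc)

lemma Expect_mult_left: "Expect Om p (\<lambda>z. c * f z) = c * Expect Om p f"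
  by (simp add: Expect_def sum_distrib_left algebra_simps)

lemma Expect_divide: "Expect Om p (\<lambda>z. f z / c) = Expect Om p f / c"
  by (simp add: Expect_def sum_divide_distrib)

lemma Expect_const: "sum p Om = 1 \<Longrightarrow> Expect Om p (\<lambda>z. c) = c"
  by (simp add: Expect_def sum_distrib_right[symmetric])

lemma Expect_ind: "Expect Om p (\<lambda>z. ind (D i z = d)) = pi1 Om p D i d"
  by (simp add: pi1_def)

lemma Expect_ind_ind:
  "Expect Om p (\<lambda>z. ind (D i z = d) * ind (D j z = d')) = pi2 Om p D i j d d'"
  by (simp add: pi2_def ind_conj)

lemma pi2_diag: "pi2 Om p D i i d d = pi1 Om p D i d"
  by (simp add: pi1_def pi2_def)

lemma pi2_diag_distinct: "d \<noteq> d' \<Longrightarrow> pi2 Om p D i i d d' = 0"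
  by (auto simp: pi2_def Expect_def ind_def intro!: sum.neutral)

lemma pi2_nonneg: "\<forall>z\<in>Om. 0 \<le> p z \<Longrightarrow> 0 \<le> pi2 Om p D i j d d'"
  unfolding pi2_def Expect_def by (intro sum_nonneg) (auto simp: ind_def)

definition Cov :: "(nat \<Rightarrow> nat) set \<Rightarrow> ((nat \<Rightarrow> nat) \<Rightarrow> real)
    \<Rightarrow> ((nat \<Rightarrow> nat) \<Rightarrow> real) \<Rightarrow> ((nat \<Rightarrow> nat) \<Rightarrow> real) \<Rightarrow> real" where
  "Cov Om p X Y = Expect Om p (\<lambda>z. X z * Y z) - Expect Om p X * Expect Om p Y"

lemma Vr_eq_Cov:
  assumes "sum p Om = 1"
  shows "Vr Om p X = Cov Om p X X"
proof -
  define m where "m = Expect Om p X"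
  have "(\<lambda>z. (X z - m)\<^sup>2) = (\<lambda>z. (X z * X z - (2 * m) * X z) + m\<^sup>2)"
    by (rule ext) (simp add: power2_eq_square algebra_simps)
  then have "Vr Om p X = Expect Om p (\<lambda>z. X z * X z) - 2 * m * m + m\<^sup>2"
    unfolding Vr_def m_def[symmetric]
    by (simp only: Expect_add Expect_diff Expect_mult_left Expect_const assms m_def)
  then show ?thesis
    by (simp add: Cov_def m_def power2_eq_square)
qed

lemma Vr_diff:
  assumes "sum p Om = 1"
  shows "Vr Om p (\<lambda>z. X z - Y z) = Vr Om p X + Vr Om p Y - 2 * Cov Om p X Y"
proof -
  have "(\<lambda>z. (X z - Y z) * (X z - Y z)) = (\<lambda>z. (X z * X z - 2 * (X z * Y z)) + Y z * Y z)"
    by (rule ext) (simp add: algebra_simps)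
  then have "Expect Om p (\<lambda>z. (X z - Y z) * (X z - Y z))
      = Expect Om p (\<lambda>z. X z * X z) - 2 * Expect Om p (\<lambda>z. X z * Y z) + Expect Om p (\<lambda>z. Y z * Y z)"
    by (simp only: Expect_add Expect_diff Expect_mult_left)
  then show ?thesis
    unfolding Vr_eq_Cov[OF assms] Cov_def Expect_diff by (simp add: algebra_simps)
qed

lemma Vr_divide: "Vr Om p (\<lambda>z. X z / c) = Vr Om p X / c\<^sup>2"
proof -
  have "(\<lambda>z. (X z / c - Expect Om p X / c)\<^sup>2) = (\<lambda>z. (X z - Expect Om p X)\<^sup>2 / c\<^sup>2)"
    by (rule ext) (simp add: diff_divide_distrib[symmetric] power_divide)
  then show ?thesis
    unfolding Vr_def Expect_divide by (simp add: Expect_divide)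
qed

lemma yHT_eq_sum_ind:
  "yHT N Om p D y d = (\<lambda>z. \<Sum>i<N. ind (D i z = d) * (y i d / pi1 Om p D i d))"
  by (rule ext) (simp add: yHT_def)

lemma Expect_yHT:
  "Expect Om p (yHT N Om p D y d) = (\<Sum>i<N. pi1 Om p D i d * (y i d / pi1 Om p D i d))"
  unfolding yHT_eq_sum_ind by (simp only: Expect_sum Expect_mult_right Expect_ind)

lemma Cov_yHT:
  "Cov Om p (yHT N Om p D y d) (yHT N Om p D y d') =
     (\<Sum>i<N. \<Sum>j<N. (pi2 Om p D i j d d' - pi1 Om p D i d * pi1 Om p D j d')
        * (y i d / pi1 Om p D i d) * (y j d' / pi1 Om p D j d'))"
proof -
  define u where "u i = y i d / pi1 Om p D i d" for i
  define v where "v j = y j d' / pi1 Om p D j d'" for j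
  have "(\<lambda>z. yHT N Om p D y d z * yHT N Om p D y d' z)
      = (\<lambda>z. \<Sum>i<N. \<Sum>j<N. (ind (D i z = d) * ind (D j z = d')) * (u i * v j))"
    by (rule ext) (simp add: yHT_eq_sum_ind u_def v_def sum_product algebra_simps)
  then have "Expect Om p (\<lambda>z. yHT N Om p D y d z * yHT N Om p D y d' z)
      = (\<Sum>i<N. \<Sum>j<N. pi2 Om p D i j d d' * (u i * v j))"
    by (simp only: Expect_sum Expect_mult_right Expect_ind_ind)
  then show ?thesis
    unfolding Cov_def Expect_yHT u_def[symmetric] v_def[symmetric] sum_product
    by (simp add: sum_subtractf[symmetric] algebra_simps)
qed

lemma Expect_VarHat:
  assumes pi_nz: "\<forall>i<N. pi1 Om p D i d \<noteq> 0"
  shows "Expect Om p (VarHat N Om p D y d) =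
     (\<Sum>i<N. \<Sum>j<N. if pi2 Om p D i j d d = 0 then 0
        else (pi2 Om p D i j d d - pi1 Om p D i d * pi1 Om p D j d)
          * (y i d / pi1 Om p D i d) * (y j d / pi1 Om p D j d))"
proof -
  define \<pi> where "\<pi> i = pi1 Om p D i d" for i
  define P where "P i j = pi2 Om p D i j d d" for i j
  define u where "u i = y i d / \<pi> i" for i
  have "Expect Om p (VarHat N Om p D y d) = (\<Sum>i<N. \<pi> i * (1 - \<pi> i) * (u i)\<^sup>2)
     + (\<Sum>i<N. \<Sum>j\<in>{..<N} - {i}. P i j * ((P i j - \<pi> i * \<pi> j) / P i j) * u i * u j)"
    unfolding VarHat_def
    by (simp only: Expect_add Expect_sum Expect_mult_right Expect_ind Expect_ind_ind
        \<pi>_def[symmetric] P_def[symmetric] u_def[symmetric])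
  also have "\<dots> = (\<Sum>i<N. \<Sum>j<N. if P i j = 0 then 0 else (P i j - \<pi> i * \<pi> j) * u i * u j)"
    unfolding sum.distrib[symmetric]
  proof (rule sum.cong[OF refl])
    fix i assume "i \<in> {..<N}"
    then have diag: "P i i \<noteq> 0" "P i i = \<pi> i"
      using pi_nz by (simp_all add: P_def \<pi>_def pi2_diag)
    have cancel_P: "P i j * ((P i j - \<pi> i * \<pi> j) / P i j) * u i * u j
        = (if P i j = 0 then 0 else (P i j - \<pi> i * \<pi> j) * u i * u j)" for j
      by simp
    then show "\<pi> i * (1 - \<pi> i) * (u i)\<^sup>2
        + (\<Sum>j\<in>{..<N} - {i}. P i j * ((P i j - \<pi> i * \<pi> j) / P i j) * u i * u j)
      = (\<Sum>j<N. if P i j = 0 then 0 else (P i j - \<pi> i * \<pi> j) * u i * u j)"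
      using \<open>i \<in> {..<N}\<close> diag
      by (simp only: cancel_P) (simp add: sum.remove[of "{..<N}" i] power2_eq_square algebra_simps)
  qed
  finally show ?thesis
    by (simp only: \<pi>_def P_def u_def)
qed

lemma Expect_A2Hat:
  assumes pi_nz: "\<forall>i<N. pi1 Om p D i d \<noteq> 0"
  shows "Expect Om p (A2Hat N Om p D y d) =
     (\<Sum>i<N. \<Sum>j\<in>{j. j < N \<and> j \<noteq> i \<and> pi2 Om p D i j d d = 0}. ((y i d)\<^sup>2 + (y j d)\<^sup>2) / 2)"
  unfolding A2Hat_def
  by (simp only: Expect_add Expect_sum Expect_mult_right Expect_divide Expect_ind)
    (use pi_nz in \<open>auto intro!: sum.cong simp: add_divide_distrib\<close>)

lemma Expect_CovAHat:
  assumes pik_nz: "\<forall>i<N. pi1 Om p D i dk \<noteq> 0" and pil_nz: "\<forall>i<N. pi1 Om p D i dl \<noteq> 0"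
    and "dk \<noteq> dl"
  shows "Expect Om p (CovAHat N Om p D y dk dl) =
     (\<Sum>i<N. \<Sum>j<N. if 0 < pi2 Om p D i j dk dl
        then (pi2 Om p D i j dk dl - pi1 Om p D i dk * pi1 Om p D j dl)
          * (y i dk / pi1 Om p D i dk) * (y j dl / pi1 Om p D j dl)
        else 0)
   - (\<Sum>i<N. \<Sum>j\<in>{j. j < N \<and> pi2 Om p D i j dk dl = 0}. ((y i dk)\<^sup>2 + (y j dl)\<^sup>2) / 2)"
proof -
  define \<pi> where "\<pi> i = pi1 Om p D i dk" for i
  define \<rho> where "\<rho> i = pi1 Om p D i dl" for i
  define R where "R i j = pi2 Om p D i j dk dl" for i j
  define u where "u i = y i dk / \<pi> i" for i
  define v where "v j = y j dl / \<rho> j" for j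
  have positive_pairs: "{j. j < N \<and> j \<noteq> i \<and> 0 < R i j} = {j\<in>{..<N}. 0 < R i j}" for i
    using pi2_diag_distinct[OF \<open>dk \<noteq> dl\<close>] by (auto simp: R_def)
  have "Expect Om p (CovAHat N Om p D y dk dl) =
     (\<Sum>i<N. \<Sum>j\<in>{j. j < N \<and> j \<noteq> i \<and> 0 < R i j}. R i j / R i j * u i * v j * (R i j - \<pi> i * \<rho> j))
   - (\<Sum>i<N. \<Sum>j\<in>{j. j < N \<and> R i j = 0}. \<pi> i * (y i dk)\<^sup>2 / (2 * \<pi> i) + \<rho> j * (y j dl)\<^sup>2 / (2 * \<rho> j))"
    unfolding CovAHat_def
    by (simp only: Expect_add Expect_diff Expect_sum Expect_mult_right Expect_divide Expect_ind
        Expect_ind_ind \<pi>_def[symmetric] \<rho>_def[symmetric] R_def[symmetric] u_def[symmetric]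
        v_def[symmetric])
  also have "\<dots> = (\<Sum>i<N. \<Sum>j<N. if 0 < R i j then (R i j - \<pi> i * \<rho> j) * u i * v j else 0)
   - (\<Sum>i<N. \<Sum>j\<in>{j. j < N \<and> R i j = 0}. ((y i dk)\<^sup>2 + (y j dl)\<^sup>2) / 2)"
    unfolding positive_pairs sum.inter_filter[OF finite_lessThan]
    using pik_nz pil_nz
    by (auto intro!: sum.cong arg_cong2[where f = minus] simp: \<pi>_def \<rho>_def add_divide_distrib)
  finally show ?thesis
    by (simp only: \<pi>_def \<rho>_def R_def u_def v_def)
qed

lemma Vr_yHT_le_Expect_VarHat_A2Hat:
  assumes "sum p Om = 1" and pi_nz: "\<forall>i<N. pi1 Om p D i d \<noteq> 0"
  shows "Vr Om p (yHT N Om p D y d)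
    \<le> Expect Om p (VarHat N Om p D y d) + Expect Om p (A2Hat N Om p D y d)"
proof -
  define \<pi> where "\<pi> i = pi1 Om p D i d" for i
  define P where "P i j = pi2 Om p D i j d d" for i j
  define u where "u i = y i d / \<pi> i" for i
  have "{j. j < N \<and> j \<noteq> i \<and> P i j = 0} = {j\<in>{..<N}. j \<noteq> i \<and> P i j = 0}" for i
    by auto
  then have A2: "Expect Om p (A2Hat N Om p D y d) =
      (\<Sum>i<N. \<Sum>j<N. if j \<noteq> i \<and> P i j = 0 then ((y i d)\<^sup>2 + (y j d)\<^sup>2) / 2 else 0)"
    unfolding Expect_A2Hat[OF pi_nz] P_def[symmetric] by (simp only: sum.inter_filter[OF finite_lessThan])
  have "Vr Om p (yHT N Om p D y d) = (\<Sum>i<N. \<Sum>j<N. (P i j - \<pi> i * \<pi> j) * u i * u j)"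
    unfolding Vr_eq_Cov[OF \<open>sum p Om = 1\<close>] Cov_yHT by (simp add: \<pi>_def P_def u_def)
  also have "\<dots> \<le> (\<Sum>i<N. \<Sum>j<N. (if P i j = 0 then 0 else (P i j - \<pi> i * \<pi> j) * u i * u j)
      + (if j \<noteq> i \<and> P i j = 0 then ((y i d)\<^sup>2 + (y j d)\<^sup>2) / 2 else 0))"
  proof (intro sum_mono)
    fix i j assume "i \<in> {..<N}" "j \<in> {..<N}"
    then have "\<pi> i \<noteq> 0" "\<pi> j \<noteq> 0"
      using pi_nz by (auto simp: \<pi>_def)
    moreover have "P i i = \<pi> i"
      by (simp add: P_def \<pi>_def pi2_diag)
    moreover have "2 * (- y i d) * y j d \<le> (- y i d)\<^sup>2 + (y j d)\<^sup>2"
      by (rule sum_squares_bound)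
    ultimately show "(P i j - \<pi> i * \<pi> j) * u i * u j
      \<le> (if P i j = 0 then 0 else (P i j - \<pi> i * \<pi> j) * u i * u j)
        + (if j \<noteq> i \<and> P i j = 0 then ((y i d)\<^sup>2 + (y j d)\<^sup>2) / 2 else 0)"
      by (auto simp: u_def)
  qed
  also have "\<dots> = Expect Om p (VarHat N Om p D y d) + Expect Om p (A2Hat N Om p D y d)"
    unfolding Expect_VarHat[OF pi_nz] A2 sum.distrib by (simp only: \<pi>_def P_def u_def)
  finally show ?thesis .
qed

lemma Expect_CovAHat_le_Cov_yHT:
  assumes p_nonneg: "\<forall>z\<in>Om. 0 \<le> p z"
    and pik_nz: "\<forall>i<N. pi1 Om p D i dk \<noteq> 0" and pil_nz: "\<forall>i<N. pi1 Om p D i dl \<noteq> 0"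
    and "dk \<noteq> dl"
  shows "Expect Om p (CovAHat N Om p D y dk dl) \<le> Cov Om p (yHT N Om p D y dk) (yHT N Om p D y dl)"
proof -
  define \<pi> where "\<pi> i = pi1 Om p D i dk" for i
  define \<rho> where "\<rho> i = pi1 Om p D i dl" for i
  define R where "R i j = pi2 Om p D i j dk dl" for i j
  define u where "u i = y i dk / \<pi> i" for i
  define v where "v j = y j dl / \<rho> j" for j
  have "{j. j < N \<and> R i j = 0} = {j\<in>{..<N}. R i j = 0}" for i
    by auto
  then have "Expect Om p (CovAHat N Om p D y dk dl) =
     (\<Sum>i<N. \<Sum>j<N. (if 0 < R i j then (R i j - \<pi> i * \<rho> j) * u i * v j else 0)
       - (if R i j = 0 then ((y i dk)\<^sup>2 + (y j dl)\<^sup>2) / 2 else 0))"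
    unfolding Expect_CovAHat[OF pik_nz pil_nz \<open>dk \<noteq> dl\<close>]
      \<pi>_def[symmetric] \<rho>_def[symmetric] R_def[symmetric] u_def[symmetric] v_def[symmetric]
    by (simp only: sum.inter_filter[OF finite_lessThan] sum_subtractf)
  also have "\<dots> \<le> (\<Sum>i<N. \<Sum>j<N. (R i j - \<pi> i * \<rho> j) * u i * v j)"
  proof (intro sum_mono)
    fix i j assume "i \<in> {..<N}" "j \<in> {..<N}"
    then have "\<pi> i \<noteq> 0" "\<rho> j \<noteq> 0"
      using pik_nz pil_nz by (auto simp: \<pi>_def \<rho>_def)
    moreover have "0 \<le> R i j"
      unfolding R_def using p_nonneg by (rule pi2_nonneg)
    moreover have "2 * y i dk * y j dl \<le> (y i dk)\<^sup>2 + (y j dl)\<^sup>2"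
      by (rule sum_squares_bound)
    ultimately show "(if 0 < R i j then (R i j - \<pi> i * \<rho> j) * u i * v j else 0)
       - (if R i j = 0 then ((y i dk)\<^sup>2 + (y j dl)\<^sup>2) / 2 else 0)
      \<le> (R i j - \<pi> i * \<rho> j) * u i * v j"
      by (auto simp: u_def v_def)
  qed
  also have "\<dots> = Cov Om p (yHT N Om p D y dk) (yHT N Om p D y dl)"
    unfolding Cov_yHT by (simp only: \<pi>_def \<rho>_def R_def u_def v_def)
  finally show ?thesis .
qed

theorem mainTheorem3:
  fixes N M :: nat
    and Om :: "(nat \<Rightarrow> nat) set"
    and p :: "(nat \<Rightarrow> nat) \<Rightarrow> real"
    and f :: "(nat \<Rightarrow> nat) \<Rightarrow> 'th \<Rightarrow> 'd"
    and \<theta> :: "nat \<Rightarrow> 'th"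
    and Delta :: "'d set"
    and y :: "nat \<Rightarrow> 'd \<Rightarrow> real"
    and dk dl :: 'd
  defines "D \<equiv> (\<lambda>i z. f z (\<theta> i))"
  assumes Om_sub: "Om \<subseteq> PiE {..<N} (\<lambda>_. {1..M})"
    and p_pos: "\<forall>z\<in>Om. p z > 0"
    and p_sum: "(\<Sum>z\<in>Om. p z) = 1"
    and Delta_fin: "finite Delta"
    and f_range: "\<forall>z\<in>Om. \<forall>i<N. f z (\<theta> i) \<in> Delta"
    and pi_bounds: "\<forall>i<N. \<forall>d\<in>Delta. 0 < pi1 Om p D i d \<and> pi1 Om p D i d < 1"
    and dk_in: "dk \<in> Delta" and dl_in: "dl \<in> Delta"
    and dkl: "dk \<noteq> dl"
  shows "Expect Om p (VarTauHat N Om p D y dk dl) \<ge> Vr Om p (tauHT N Om p D y dk dl)"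
proof -
  let ?X = "yHT N Om p D y dk" and ?Y = "yHT N Om p D y dl"
  have pik_nz: "\<forall>i<N. pi1 Om p D i dk \<noteq> 0" and pil_nz: "\<forall>i<N. pi1 Om p D i dl \<noteq> 0"
    using pi_bounds dk_in dl_in by (metis less_irrefl)+
  have p_nonneg: "\<forall>z\<in>Om. 0 \<le> p z"
    using p_pos by (simp add: less_imp_le)
  have "Vr Om p (tauHT N Om p D y dk dl) = Vr Om p (\<lambda>z. (?X z - ?Y z) / real N)"
    unfolding tauHT_def ..
  also have "\<dots> = (Vr Om p ?X + Vr Om p ?Y - 2 * Cov Om p ?X ?Y) / (real N)\<^sup>2"
    by (simp only: Vr_divide Vr_diff[OF p_sum])
  also have "\<dots> \<le> (Expect Om p (VarHat N Om p D y dk) + Expect Om p (A2Hat N Om p D y dk)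
      + Expect Om p (VarHat N Om p D y dl) + Expect Om p (A2Hat N Om p D y dl)
      - 2 * Expect Om p (CovAHat N Om p D y dk dl)) / (real N)\<^sup>2"
    using Vr_yHT_le_Expect_VarHat_A2Hat[OF p_sum pik_nz, of y]
      Vr_yHT_le_Expect_VarHat_A2Hat[OF p_sum pil_nz, of y]
      Expect_CovAHat_le_Cov_yHT[OF p_nonneg pik_nz pil_nz dkl, of y]
    by (intro divide_right_mono) (linarith, simp)
  also have "\<dots> = Expect Om p (VarTauHat N Om p D y dk dl)"
    unfolding VarTauHat_def by (simp only: Expect_divide Expect_add Expect_diff Expect_mult_left)
  finally show ?thesis .
qed

end
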